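(* Let $G$ be a non-complete double-critical $7$-chromatic graph and let $x$ be a vertex of degree $9$ in $G$. Then the complement $\overline{G_x}$ does not contain $K_4^-$ (the complete graph on $4$ vertices minus one edge) as a subgraph.
   Context: All graphs are finite and simple. A graph $G$ is (vertex-)critical if $\chi(G-v)<\chi(G)$ for every vertex $v\in V(G)$. A critical graph $G$ is double-critical if $\chi(G-x-y)\le\chi(G)-2$ for every edge $xy\in E(G)$. For a vertex $x$, $G_x:=G[N(x)]$ denotes the subgraph induced by the neighbourhood of $x$, and $\overline{G_x}$ its complement. *)

theory Defs
  imports Main
begin

text \<open>A finite simple graph is given by a finite vertex set V and a symmetric,
irreflexive adjacency relation E (only its restriction to V matters).
Subgraphs G - v, G - x - y are the induced subgraphs on V minus those vertices.\<close>

definition simple_graph :: "'a set \<Rightarrow> ('a \<Rightarrow> 'a \<Rightarrow> bool) \<Rightarrow> bool" where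
  "simple_graph V E \<longleftrightarrow> finite V \<and> (\<forall>u v. E u v \<longrightarrow> E v u) \<and> (\<forall>v. \<not> E v v)"

definition colorable :: "('a \<Rightarrow> 'a \<Rightarrow> bool) \<Rightarrow> 'a set \<Rightarrow> nat \<Rightarrow> bool" where
  "colorable E S k \<longleftrightarrow> (\<exists>c :: 'a \<Rightarrow> nat. (\<forall>v\<in>S. c v < k) \<and>
      (\<forall>u\<in>S. \<forall>v\<in>S. E u v \<longrightarrow> c u \<noteq> c v))"

definition chi :: "('a \<Rightarrow> 'a \<Rightarrow> bool) \<Rightarrow> 'a set \<Rightarrow> nat" where
  "chi E S = (LEAST k. colorable E S k)"

definition vertex_critical :: "'a set \<Rightarrow> ('a \<Rightarrow> 'a \<Rightarrow> bool) \<Rightarrow> bool" where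
  "vertex_critical V E \<longleftrightarrow> (\<forall>v\<in>V. chi E (V - {v}) < chi E V)"

definition double_critical :: "'a set \<Rightarrow> ('a \<Rightarrow> 'a \<Rightarrow> bool) \<Rightarrow> bool" where
  "double_critical V E \<longleftrightarrow> vertex_critical V E \<and>
     (\<forall>x\<in>V. \<forall>y\<in>V. E x y \<longrightarrow> chi E (V - {x, y}) + 2 \<le> chi E V)"

definition complete_graph :: "'a set \<Rightarrow> ('a \<Rightarrow> 'a \<Rightarrow> bool) \<Rightarrow> bool" where
  "complete_graph V E \<longleftrightarrow> (\<forall>u\<in>V. \<forall>v\<in>V. u \<noteq> v \<longrightarrow> E u v)"

definition nbhd :: "'a set \<Rightarrow> ('a \<Rightarrow> 'a \<Rightarrow> bool) \<Rightarrow> 'a \<Rightarrow> 'a set" where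
  "nbhd V E x = {y\<in>V. E x y}"

definition degree :: "'a set \<Rightarrow> ('a \<Rightarrow> 'a \<Rightarrow> bool) \<Rightarrow> 'a \<Rightarrow> nat" where
  "degree V E x = card (nbhd V E x)"

definition contains_K4_minus :: "'a set \<Rightarrow> ('a \<Rightarrow> 'a \<Rightarrow> bool) \<Rightarrow> bool" where
  "contains_K4_minus S F \<longleftrightarrow> (\<exists>a\<in>S. \<exists>b\<in>S. \<exists>c\<in>S. \<exists>d\<in>S. distinct [a, b, c, d] \<and>
      F a b \<and> F a c \<and> F a d \<and> F b c \<and> F b d)"

definition compl_adj :: "('a \<Rightarrow> 'a \<Rightarrow> bool) \<Rightarrow> 'a \<Rightarrow> 'a \<Rightarrow> bool" where
  "compl_adj E u v \<longleftrightarrow> u \<noteq> v \<and> \<not> E u v"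

end

theory Submission
  imports Defs
begin

text \<open>For an edge \<open>xy\<close> of a \<open>(k+2)\<close>-chromatic double-critical graph, every \<open>k\<close>-colouring of
\<open>G - x - y\<close> uses all \<open>k\<close> colours on common neighbours of \<open>x\<close> and \<open>y\<close>: if colour \<open>i\<close> were
missing there, recolouring \<open>x\<close> with \<open>i\<close>, \<open>y\<close> and the \<open>i\<close>-coloured neighbours of \<open>x\<close> with a
new colour would give a \<open>(k+1)\<close>-colouring of \<open>G\<close>. Now let \<open>a, b, c, d\<close> span \<open>K\<^sub>4\<^sup>-\<close> in
\<open>\<overline>G\<^sub>x\<close>, with \<open>cd\<close> the possibly missing edge. Inside \<open>N(x)\<close>, both \<open>a\<close> and \<open>b\<close> have all
their neighbours among the remaining \<open>9 - 4 = 5\<close> vertices \<open>R\<close>, and \<open>b\<close> has at least \<open>5\<close>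
neighbours there, so \<open>N(x) \<inter> N(b) = R \<supseteq> N(x) \<inter> N(a)\<close>. In a \<open>5\<close>-colouring of \<open>G - x - a\<close>,
the colour of \<open>b\<close> then reappears on a neighbour of \<open>b\<close>, which is absurd.\<close>

lemma colorable_mono: "colorable E S k \<Longrightarrow> k \<le> k' \<Longrightarrow> colorable E S k'"
  unfolding colorable_def by (meson less_le_trans)

lemma colorable_card:
  assumes "finite S" "\<forall>v. \<not> E v v"
  shows "colorable E S (card S)"
proof -
  obtain h where "bij_betw h S {0..<card S}"
    using ex_bij_betw_finite_nat[OF assms(1)] by blast
  then show ?thesis
    unfolding colorable_def using assms(2)
    by (intro exI[of _ h]) (auto simp: bij_betw_def inj_on_def)
qed

lemma colorable_chi:
  assumes "finite S" "\<forall>v. \<not> E v v"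
  shows "colorable E S (chi E S)"
  unfolding chi_def using colorable_card[of S E, OF assms] by (rule LeastI)

lemma chi_le: "colorable E S k \<Longrightarrow> chi E S \<le> k"
  unfolding chi_def by (rule Least_le)

lemma double_critical_colorable_minus_edge:
  assumes "simple_graph V E" "double_critical V E" "chi E V = k + 2"
    and "x \<in> V" "y \<in> V" "E x y"
  shows "colorable E (V - {x, y}) k"
proof -
  have "chi E (V - {x, y}) \<le> k"
    using assms(2-6) unfolding double_critical_def by fastforce
  moreover have "colorable E (V - {x, y}) (chi E (V - {x, y}))"
    using assms(1) by (intro colorable_chi) (auto simp: simple_graph_def)
  ultimately show ?thesis by (blast intro: colorable_mono)
qed

lemma every_colour_on_common_neighbour:
  assumes sg: "simple_graph V E" and not_col: "\<not> colorable E V (Suc k)"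
    and "x \<in> V" "y \<in> V" "E x y"
    and \<phi>_range: "\<forall>v\<in>V - {x, y}. \<phi> v < k"
    and \<phi>_proper: "\<forall>u\<in>V - {x, y}. \<forall>v\<in>V - {x, y}. E u v \<longrightarrow> \<phi> u \<noteq> \<phi> v"
    and "i < k"
  shows "\<exists>v\<in>V - {x, y}. E x v \<and> E y v \<and> \<phi> v = i"
proof (rule ccontr)
  assume missing: "\<not> ?thesis"
  have sym: "\<And>u v. E u v \<Longrightarrow> E v u" and irr: "\<And>v. \<not> E v v"
    using sg unfolding simple_graph_def by auto
  have "x \<noteq> y" using \<open>E x y\<close> irr by auto
  define c where "c v = (if v = x then i else if v = y \<or> (\<phi> v = i \<and> E x v) then k else \<phi> v)"
    for v
  have cx: "c x = i" and cy: "c y = k"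
    using \<open>x \<noteq> y\<close> \<open>i < k\<close> unfolding c_def by auto
  have not_i: "c w \<noteq> i" if "w \<in> V - {x, y}" "E x w" for w
    using that \<open>i < k\<close> unfolding c_def by auto
  have not_k: "c w \<noteq> k" if "w \<in> V - {x, y}" "E y w" for w
    using that missing \<phi>_range unfolding c_def by fastforce
  have proper_rest: "c w \<noteq> c w'" if "w \<in> V - {x, y}" "w' \<in> V - {x, y}" "E w w'" for w w'
  proof -
    have "\<phi> w \<noteq> \<phi> w'" "\<phi> w < k" "\<phi> w' < k"
      using that \<phi>_proper \<phi>_range by auto
    then show ?thesis using that unfolding c_def by auto
  qed
  have "colorable E V (Suc k)"
    unfolding colorable_def
  proof (intro exI[of _ c] conjI ballI impI)
    show "c v < Suc k" if "v \<in> V" for v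
      using that \<phi>_range \<open>i < k\<close> unfolding c_def by (simp add: less_Suc_eq)
    show "c u \<noteq> c v" if "u \<in> V" "v \<in> V" "E u v" for u v
      using that sym[OF \<open>E u v\<close>] irr cx cy \<open>i < k\<close> not_i not_k proper_rest
      by (metis DiffI emptyE insertE less_irrefl)
  qed
  with not_col show False by blast
qed

lemma card_common_nbhd_ge:
  assumes "simple_graph V E" "\<not> colorable E V (Suc k)" "colorable E (V - {x, y}) k"
    and "x \<in> V" "y \<in> V" "E x y"
  shows "k \<le> card (nbhd V E x \<inter> nbhd V E y)"
proof -
  obtain \<phi> where \<phi>: "\<forall>v\<in>V - {x, y}. \<phi> v < k"
    "\<forall>u\<in>V - {x, y}. \<forall>v\<in>V - {x, y}. E u v \<longrightarrow> \<phi> u \<noteq> \<phi> v"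
    using assms(3) unfolding colorable_def by blast
  have "{0..<k} \<subseteq> \<phi> ` (nbhd V E x \<inter> nbhd V E y)"
    using every_colour_on_common_neighbour[OF assms(1,2,4-6) \<phi>]
    by (fastforce simp: nbhd_def)
  moreover have "finite (nbhd V E x \<inter> nbhd V E y)"
    using assms(1) by (simp add: simple_graph_def nbhd_def)
  ultimately show ?thesis
    by (metis card_atLeastLessThan card_image_le card_mono diff_zero finite_imageI le_trans)
qed

lemma common_nbhd_not_subset_nbhd:
  assumes "simple_graph V E" "\<not> colorable E V (Suc k)" "colorable E (V - {x, a}) k"
    and "x \<in> V" "a \<in> V" "E x a" "b \<in> nbhd V E x" "b \<noteq> a"
  shows "\<not> nbhd V E x \<inter> nbhd V E a \<subseteq> nbhd V E b"
proof
  assume sub: "nbhd V E x \<inter> nbhd V E a \<subseteq> nbhd V E b"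
  obtain \<phi> where \<phi>: "\<forall>v\<in>V - {x, a}. \<phi> v < k"
    "\<forall>u\<in>V - {x, a}. \<forall>v\<in>V - {x, a}. E u v \<longrightarrow> \<phi> u \<noteq> \<phi> v"
    using assms(3) unfolding colorable_def by blast
  have b: "b \<in> V - {x, a}"
    using assms(1,7,8) by (auto simp: nbhd_def simple_graph_def)
  then obtain v where "v \<in> V - {x, a}" "E x v" "E a v" "\<phi> v = \<phi> b"
    using every_colour_on_common_neighbour[OF assms(1,2,4-6) \<phi>, of "\<phi> b"] \<phi>(1) by blast
  moreover from this sub have "E b v" by (auto simp: nbhd_def)
  ultimately show False using \<phi>(2) b by metis
qed

theorem proposition26:
  fixes V :: "'a set" and E :: "'a \<Rightarrow> 'a \<Rightarrow> bool" and x :: 'a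
  assumes "simple_graph V E"
    and "double_critical V E"
    and "chi E V = 7"
    and "\<not> complete_graph V E"
    and "x \<in> V"
    and "degree V E x = 9"
  shows "\<not> contains_K4_minus (nbhd V E x) (compl_adj E)"
proof
  assume "contains_K4_minus (nbhd V E x) (compl_adj E)"
  then obtain a b c d where in_N: "a \<in> nbhd V E x" "b \<in> nbhd V E x" "c \<in> nbhd V E x"
      "d \<in> nbhd V E x" and "distinct [a, b, c, d]"
    and non_adj: "compl_adj E a b" "compl_adj E a c" "compl_adj E a d"
      "compl_adj E b c" "compl_adj E b d"
    unfolding contains_K4_minus_def by blast
  define R where "R = nbhd V E x - {a, b, c, d}"
  have fin: "finite (nbhd V E x)" and sym: "\<And>u v. E u v \<Longrightarrow> E v u"
    using assms(1) by (auto simp: simple_graph_def nbhd_def)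
  have "card R = 5"
    using assms(6) in_N \<open>distinct [a, b, c, d]\<close> fin
    by (simp add: R_def degree_def card_Diff_subset)
  have in_R: "nbhd V E x \<inter> nbhd V E y \<subseteq> R" if "y \<in> {a, b}" for y
    using that non_adj sym assms(1) by (auto simp: R_def nbhd_def compl_adj_def simple_graph_def)
  have not_col: "\<not> colorable E V (Suc 5)"
    using chi_le assms(3) by fastforce
  have col: "colorable E (V - {x, y}) 5" if "y \<in> {a, b}" for y
    using that in_N assms(1-3,5)
    by (intro double_critical_colorable_minus_edge) (auto simp: nbhd_def)
  have "nbhd V E x \<inter> nbhd V E b = R"
    using card_common_nbhd_ge[OF assms(1) not_col col[of b]] in_N(2) in_R assms(5) \<open>card R = 5\<close> fin
    by (intro card_seteq) (auto simp: R_def nbhd_def)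
  with in_R[of a] have "nbhd V E x \<inter> nbhd V E a \<subseteq> nbhd V E b" by auto
  moreover have "\<not> nbhd V E x \<inter> nbhd V E a \<subseteq> nbhd V E b"
    using in_N(1,2) \<open>distinct [a, b, c, d]\<close> assms(1,5)
    by (intro common_nbhd_not_subset_nbhd[OF _ not_col col]) (auto simp: nbhd_def)
  ultimately show False by blast
qed

end
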